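(* Let $a,e\in\mathbb{R}$, $\omega>0$, and let $\alpha_i(t)$ ($i=1,\dots,4$) be scalar continuous functions (not necessarily odd). (i) Suppose $\alpha_3(t)$ is $\omega$-periodic, $a(a+e)<0$, and there exists $k\in\mathbb{Z}$ with $\int_0^\omega\alpha_3(s)\,ds=2\pi k$. Then the solution $$x(t)=\sqrt{-a(a+e)}\sin\Big(\int_0^t\alpha_3(s)ds\Big),\ y(t)=\sqrt{-a(a+e)}\cos\Big(\int_0^t\alpha_3(s)ds\Big),\ z(t)=-a$$ of the system $$\begin{aligned}\dot x&=(ax+xz)(1+\alpha_1(t))+x(a+z)\alpha_2(t)+y\alpha_3(t),\\ \dot y&=(ay+yz)(1+\alpha_1(t))+y(a+z)\alpha_2(t)-x\alpha_3(t),\\ \dot z&=(ez-x^2-y^2-z^2)(1+\alpha_1(t)+\alpha_2(t))\end{aligned}$$ is $\omega$-periodic (the period not necessarily minimal). (ii) Suppose $\alpha_3(t)+a^4\alpha_4(t)$ is $\omega$-periodic and there exists $k\in\mathbb{Z}$ with $\int_0^\omega(\alpha_3(s)+a^4\alpha_4(s))\,ds=2\pi k$. Then the solution $$x(t)=a\sin\Big(\int_0^t(\alpha_3(s)+a^4\alpha_4(s))ds\Big),\ y(t)=a\cos\Big(\int_0^t(\alpha_3(s)+a^4\alpha_4(s))ds\Big),\ z(t)=-a$$ of the system $$\begin{aligned}\dot x&=(ax+xz)(1+\alpha_1(t))+x(a+z)\alpha_2(t)+y\alpha_3(t)-y(x^2+y^2)(4az+x^2+y^2+2z^2)\alpha_4(t),\\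 \dot y&=(ay+yz)(1+\alpha_1(t))+y(a+z)\alpha_2(t)-x\alpha_3(t)+x(x^2+y^2)(4az+x^2+y^2+2z^2)\alpha_4(t),\\ \dot z&=-(2az+x^2+y^2+z^2)(1+\alpha_1(t)+\alpha_2(t))\end{aligned}$$ is $\omega$-periodic (the period not necessarily minimal). *)

theory Defs
  imports "HOL-Analysis.Analysis"
begin

definition oint :: "(real \<Rightarrow> real) \<Rightarrow> real \<Rightarrow> real \<Rightarrow> real" where
  "oint f a b = (if a \<le> b then integral {a..b} f else - integral {b..a} f)"

end

theory Submission
  imports Defs
begin

text \<open>Both solutions run along the horizontal circle \<open>x\<^sup>2 + y\<^sup>2 = \<rho>\<^sup>2\<close>, \<open>z = -a\<close>, with
  \<open>\<rho>\<^sup>2 = -a(a + e)\<close> in (i) and \<open>\<rho> = a\<close> in (ii). On this circle every term containing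
  \<open>a + z\<close> vanishes, so does the right-hand side of the \<open>z\<close>-equation, and in (ii) the factor
  \<open>(x\<^sup>2 + y\<^sup>2)(4az + x\<^sup>2 + y\<^sup>2 + 2z\<^sup>2)\<close> equals \<open>-a\<^sup>4\<close>. What remains is a rotation with
  angular velocity \<open>g = \<alpha>\<^sub>3\<close>, resp. \<open>g = \<alpha>\<^sub>3 + a\<^sup>4\<alpha>\<^sub>4\<close>, whose angle is the integral of \<open>g\<close>.
  As \<open>g\<close> is \<open>\<omega>\<close>-periodic, this angle grows by \<open>\<integral>\<^sub>0\<^sup>\<omega> g = 2\<pi>k\<close> over every period.\<close>

lemma oint_eq_integral_diff:
  fixes f :: "real \<Rightarrow> real"
  assumes f: "continuous_on UNIV f" and "c \<le> a" "c \<le> b"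
  shows "oint f a b = integral {c..b} f - integral {c..a} f"
proof -
  have integrable: "f integrable_on {u..v}" for u v
    using integrable_continuous_real continuous_on_subset[OF f] by blast
  show ?thesis
  proof (cases "a \<le> b")
    case True
    then have "integral {c..a} f + integral {a..b} f = integral {c..b} f"
      using assms integrable by (intro Henstock_Kurzweil_Integration.integral_combine) auto
    with True show ?thesis by (simp add: oint_def)
  next
    case False
    then have "integral {c..b} f + integral {b..a} f = integral {c..a} f"
      using assms integrable by (intro Henstock_Kurzweil_Integration.integral_combine) auto
    with False show ?thesis by (simp add: oint_def)
  qed
qed

lemma oint_has_real_derivative:
  fixes f :: "real \<Rightarrow> real"
  assumes f: "continuous_on UNIV f"
  shows "((\<lambda>t. oint f a t) has_real_derivative f t) (at t)"
proof -
  define c where "c = min a t - 1"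
  have "((\<lambda>u. integral {c..u} f) has_real_derivative f t) (at t within {c..t + 1})"
    using continuous_on_subset[OF f] by (intro integral_has_real_derivative) (auto simp: c_def)
  then have "((\<lambda>u. integral {c..u} f - integral {c..a} f) has_real_derivative f t) (at t)"
    by (auto simp: at_within_Icc_at c_def intro!: derivative_eq_intros)
  then show ?thesis
    by (rule has_field_derivative_transform_within_open[where S = "{c<..}"])
      (auto simp: c_def intro!: oint_eq_integral_diff[OF f, symmetric])
qed

lemma oint_add_period:
  fixes f :: "real \<Rightarrow> real"
  assumes f: "continuous_on UNIV f" and periodic: "\<And>t. f (t + w) = f t"
  shows "oint f 0 (t + w) = oint f 0 t + oint f 0 w"
proof -
  have "((\<lambda>t. oint f 0 (t + w) - oint f 0 t) has_real_derivative 0) (at u)" for u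
    using oint_has_real_derivative[OF f, of 0 "u + w", unfolded DERIV_shift]
      oint_has_real_derivative[OF f, of 0 u]
    by (auto intro!: derivative_eq_intros simp: periodic)
  then have "oint f 0 (t + w) - oint f 0 t = oint f 0 (0 + w) - oint f 0 0"
    by (intro DERIV_isconst_all) blast
  then show ?thesis by (simp add: oint_def)
qed

lemma polar_radius_squared: "(r * sin u)^2 + (r * cos u)^2 = (r::real)^2"
  by (simp add: power_mult_distrib flip: distrib_left)

lemma rotating_circle:
  fixes g :: "real \<Rightarrow> real"
  assumes g: "continuous_on UNIV g" and periodic: "\<forall>t. g (t + w) = g t"
    and winding: "\<exists>k::int. integral {0..w} g = 2 * pi * of_int k" and "w > 0"
  shows "((\<lambda>t. r * sin (oint g 0 t)) has_real_derivative r * cos (oint g 0 t) * g t) (at t)"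
    and "((\<lambda>t. r * cos (oint g 0 t)) has_real_derivative - (r * sin (oint g 0 t)) * g t) (at t)"
    and "r * sin (oint g 0 (t + w)) = r * sin (oint g 0 t)"
    and "r * cos (oint g 0 (t + w)) = r * cos (oint g 0 t)"
proof -
  show "((\<lambda>t. r * sin (oint g 0 t)) has_real_derivative r * cos (oint g 0 t) * g t) (at t)"
    and "((\<lambda>t. r * cos (oint g 0 t)) has_real_derivative - (r * sin (oint g 0 t)) * g t) (at t)"
    using oint_has_real_derivative[OF g] by (auto intro!: derivative_eq_intros)
  obtain k :: int where "oint g 0 w = 2 * pi * of_int k"
    using winding \<open>w > 0\<close> by (auto simp: oint_def)
  then have "oint g 0 (t + w) = oint g 0 t + 2 * pi * of_int k"
    using oint_add_period[OF g] periodic by simp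
  then show "r * sin (oint g 0 (t + w)) = r * sin (oint g 0 t)"
    and "r * cos (oint g 0 (t + w)) = r * cos (oint g 0 t)"
    by (simp_all add: sin_add cos_add)
qed

text \<open>\<open>z = -a\<close> is substituted verbatim (hence \<open>a + - a\<close>), so that these identities rewrite
  the right-hand sides in the theorem literally.\<close>

lemma system_i_field_on_circle:
  fixes x y a e p q c :: real
  assumes "x^2 + y^2 = - (a * (a + e))"
  shows "(a * x + x * - a) * p + x * (a + - a) * q + y * c = y * c"
    and "(a * y + y * - a) * p + y * (a + - a) * q - x * c = - x * c"
    and "(e * - a - x^2 - y^2 - (- a)^2) * p = 0"
  using assms by algebra+

lemma system_ii_field_on_circle:
  fixes x y a p q c d :: real
  assumes "x^2 + y^2 = a^2"
  shows "(a * x + x * - a) * p + x * (a + - a) * q + y * c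
      - y * (x^2 + y^2) * (4 * a * - a + x^2 + y^2 + 2 * (- a)^2) * d = y * (c + a^4 * d)"
    and "(a * y + y * - a) * p + y * (a + - a) * q - x * c
      + x * (x^2 + y^2) * (4 * a * - a + x^2 + y^2 + 2 * (- a)^2) * d = - x * (c + a^4 * d)"
    and "- (2 * a * - a + x^2 + y^2 + (- a)^2) * p = 0"
  using assms by algebra+

theorem theorem6:
  fixes a e \<omega> :: real and \<alpha>1 \<alpha>2 \<alpha>3 \<alpha>4 :: "real \<Rightarrow> real"
  assumes "\<omega> > 0"
    and "continuous_on UNIV \<alpha>1" and "continuous_on UNIV \<alpha>2"
    and "continuous_on UNIV \<alpha>3" and "continuous_on UNIV \<alpha>4"
  shows
   "((\<forall>t. \<alpha>3 (t + \<omega>) = \<alpha>3 t) \<and> a * (a + e) < 0 \<and>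
       (\<exists>k::int. integral {0..\<omega>} \<alpha>3 = 2 * pi * of_int k)
     \<longrightarrow>
     (let x = (\<lambda>t. sqrt (- (a * (a + e))) * sin (oint \<alpha>3 0 t));
          y = (\<lambda>t. sqrt (- (a * (a + e))) * cos (oint \<alpha>3 0 t));
          z = (\<lambda>t. - a)
      in (\<forall>t.
            (x has_real_derivative
               ((a * x t + x t * z t) * (1 + \<alpha>1 t) + x t * (a + z t) * \<alpha>2 t + y t * \<alpha>3 t)) (at t) \<and>
            (y has_real_derivative
               ((a * y t + y t * z t) * (1 + \<alpha>1 t) + y t * (a + z t) * \<alpha>2 t - x t * \<alpha>3 t)) (at t) \<and>
            (z has_real_derivative
               ((e * z t - (x t)^2 - (y t)^2 - (z t)^2) * (1 + \<alpha>1 t + \<alpha>2 t))) (at t)) \<and>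
         (\<forall>t. x (t + \<omega>) = x t \<and> y (t + \<omega>) = y t \<and> z (t + \<omega>) = z t)))
   \<and>
   ((\<forall>t. \<alpha>3 (t + \<omega>) + a^4 * \<alpha>4 (t + \<omega>) = \<alpha>3 t + a^4 * \<alpha>4 t) \<and>
       (\<exists>k::int. integral {0..\<omega>} (\<lambda>s. \<alpha>3 s + a^4 * \<alpha>4 s) = 2 * pi * of_int k)
     \<longrightarrow>
     (let x = (\<lambda>t. a * sin (oint (\<lambda>s. \<alpha>3 s + a^4 * \<alpha>4 s) 0 t));
          y = (\<lambda>t. a * cos (oint (\<lambda>s. \<alpha>3 s + a^4 * \<alpha>4 s) 0 t));
          z = (\<lambda>t. - a)
      in (\<forall>t.
            (x has_real_derivative
               ((a * x t + x t * z t) * (1 + \<alpha>1 t) + x t * (a + z t) * \<alpha>2 t + y t * \<alpha>3 t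
                - y t * ((x t)^2 + (y t)^2) * (4 * a * z t + (x t)^2 + (y t)^2 + 2 * (z t)^2) * \<alpha>4 t)) (at t) \<and>
            (y has_real_derivative
               ((a * y t + y t * z t) * (1 + \<alpha>1 t) + y t * (a + z t) * \<alpha>2 t - x t * \<alpha>3 t
                + x t * ((x t)^2 + (y t)^2) * (4 * a * z t + (x t)^2 + (y t)^2 + 2 * (z t)^2) * \<alpha>4 t)) (at t) \<and>
            (z has_real_derivative
               (- (2 * a * z t + (x t)^2 + (y t)^2 + (z t)^2) * (1 + \<alpha>1 t + \<alpha>2 t))) (at t)) \<and>
         (\<forall>t. x (t + \<omega>) = x t \<and> y (t + \<omega>) = y t \<and> z (t + \<omega>) = z t)))"
proof (intro conjI impI, goal_cases)
  case 1
  define r where "r = sqrt (- (a * (a + e)))"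
  from 1 have "(r * sin u)^2 + (r * cos u)^2 = - (a * (a + e))" for u
    by (simp add: polar_radius_squared r_def)
  note field = system_i_field_on_circle[OF this]
  from 1 have "\<forall>t. \<alpha>3 (t + \<omega>) = \<alpha>3 t"
    and "\<exists>k::int. integral {0..\<omega>} \<alpha>3 = 2 * pi * of_int k"
    by blast+
  note circle = rotating_circle[OF assms(4) this assms(1), of r]
  show ?case
    unfolding Let_def r_def[symmetric]
    by (intro allI conjI DERIV_cong[OF circle(1)] DERIV_cong[OF circle(2)] circle(3,4) refl
        DERIV_cong[OF DERIV_const]) (simp_all only: field)
next
  case 2
  define g where "g = (\<lambda>s. \<alpha>3 s + a^4 * \<alpha>4 s)"
  have g: "continuous_on UNIV g"
    unfolding g_def using assms(4,5) by (intro continuous_intros)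
  from 2 have "\<forall>t. g (t + \<omega>) = g t"
    and "\<exists>k::int. integral {0..\<omega>} g = 2 * pi * of_int k"
    by (simp_all add: g_def)
  note circle = rotating_circle[OF g this assms(1), of a]
  note field = system_ii_field_on_circle[OF polar_radius_squared]
  show ?case
    unfolding Let_def g_def[symmetric]
    by (intro allI conjI DERIV_cong[OF circle(1)] DERIV_cong[OF circle(2)] circle(3,4) refl
        DERIV_cong[OF DERIV_const]) (simp_all only: field g_def)
qed

end
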